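(* Let $G$ be a connected graph. Then $\mathrm{id}^{\leq 3}(G)\leq \left\lceil\frac{|E(G)|+\tau_3(G)}{2}\right\rceil$.
   Context: All graphs are finite and simple. A triangle-transversal of $G$ is a set $F$ of edges such that $G\setminus F$ contains no triangle; $\tau_3(G)$ is the minimum size of a triangle-transversal. For an oriented graph $D$ and $X\subseteq V(D)$, the inversion of $X$ reverses every arc with both endvertices in $X$; a $(\leq p)$-inversion is the inversion of a set of at most $p$ vertices. $\mathrm{id}^{\leq p}(G)$ is the maximum, over all ordered pairs $(\vec G_1,\vec G_2)$ of orientations of $G$, of the minimum number of $(\leq p)$-inversions transforming $\vec G_1$ into $\vec G_2$. *)

theory Defs
  imports Complex_Main
begin

definition simple_graph :: "'a set \<Rightarrow> 'a set set \<Rightarrow> bool" where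
  "simple_graph V E \<longleftrightarrow> finite V \<and>
     (\<forall>e\<in>E. \<exists>u v. e = {u, v} \<and> u \<noteq> v \<and> u \<in> V \<and> v \<in> V)"

definition connected_graph :: "'a set \<Rightarrow> 'a set set \<Rightarrow> bool" where
  "connected_graph V E \<longleftrightarrow> V \<noteq> {} \<and>
     (\<forall>u\<in>V. \<forall>v\<in>V. (\<lambda>x y. {x, y} \<in> E)\<^sup>*\<^sup>* u v)"

definition has_triangle :: "'a set set \<Rightarrow> bool" where
  "has_triangle E \<longleftrightarrow> (\<exists>a b c. a \<noteq> b \<and> b \<noteq> c \<and> a \<noteq> c \<and>
      {a, b} \<in> E \<and> {b, c} \<in> E \<and> {a, c} \<in> E)"

definition triangle_transversal :: "'a set set \<Rightarrow> 'a set set \<Rightarrow> bool" where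
  "triangle_transversal E F \<longleftrightarrow> F \<subseteq> E \<and> \<not> has_triangle (E - F)"

definition tau3 :: "'a set set \<Rightarrow> nat" where
  "tau3 E = (LEAST k. \<exists>F. triangle_transversal E F \<and> card F = k)"

definition is_orientation :: "'a set set \<Rightarrow> ('a \<times> 'a) set \<Rightarrow> bool" where
  "is_orientation E A \<longleftrightarrow> (\<forall>(u, v)\<in>A. {u, v} \<in> E) \<and>
     (\<forall>u v. {u, v} \<in> E \<longrightarrow> ((u, v) \<in> A \<longleftrightarrow> (v, u) \<notin> A))"

definition invert :: "'a set \<Rightarrow> ('a \<times> 'a) set \<Rightarrow> ('a \<times> 'a) set" where
  "invert X A = {(u, v). (u, v) \<in> A \<and> \<not> (u \<in> X \<and> v \<in> X)}
              \<union> {(v, u) | u v. (u, v) \<in> A \<and> u \<in> X \<and> v \<in> X}"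

definition invert_seq :: "'a set list \<Rightarrow> ('a \<times> 'a) set \<Rightarrow> ('a \<times> 'a) set" where
  "invert_seq Xs A = fold invert Xs A"

definition inv_dist :: "nat \<Rightarrow> 'a set \<Rightarrow> ('a \<times> 'a) set \<Rightarrow> ('a \<times> 'a) set \<Rightarrow> nat" where
  "inv_dist p V A1 A2 = (LEAST k. \<exists>Xs. length Xs = k \<and>
      (\<forall>X\<in>set Xs. X \<subseteq> V \<and> card X \<le> p) \<and> invert_seq Xs A1 = A2)"

definition id_le :: "nat \<Rightarrow> 'a set \<Rightarrow> 'a set set \<Rightarrow> nat" where
  "id_le p V E = Max {inv_dist p V A1 A2 | A1 A2. is_orientation E A1 \<and> is_orientation E A2}"

end

theory Submission
  imports Defs
begin

text \<open>Fix a minimum triangle-transversal \<open>F\<close> and put \<open>H = E - F\<close>. By minimality every edge of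
  \<open>F\<close> closes a triangle with two edges of \<open>H\<close>, so \<open>H\<close> is still connected; and \<open>H\<close> is
  triangle-free. A connected graph splits into paths of length two (cherries) and at most one
  further edge, i.e. into at most \<open>\<lceil>|H|/2\<rceil>\<close> blocks. Since \<open>H\<close> has no triangle, every set of
  edges of a cherry \<open>abc\<close> is exactly the set of \<open>H\<close>-edges inside one of \<open>{}\<close>, \<open>{a, b}\<close>,
  \<open>{b, c}\<close>, \<open>{a, b, c}\<close>. Inversions commute (their effect is the symmetric difference of the
  edge sets they reverse), so one inversion per block makes two orientations agree on \<open>H\<close>,
  and at most \<open>|F|\<close> inversions of single edges fix the rest:
  \<open>\<lceil>(|E| - |F|)/2\<rceil> + |F| = \<lceil>(|E| + \<tau>\<^sub>3)/2\<rceil>\<close>.\<close>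

definition doubleton_family :: "'a set set \<Rightarrow> bool" where
  "doubleton_family H \<longleftrightarrow> (\<forall>e\<in>H. \<exists>u v. e = {u, v} \<and> u \<noteq> v)"

lemma doubleton_familyE:
  assumes "doubleton_family H" "e \<in> H"
  obtains u v where "e = {u, v}" "u \<noteq> v"
  using assms unfolding doubleton_family_def by blast

lemma doubleton_family_memberE:
  assumes "doubleton_family H" "e \<in> H" "x \<in> e"
  obtains y where "e = {x, y}" "x \<noteq> y"
proof -
  obtain u v where uv: "e = {u, v}" "u \<noteq> v" using assms(1,2) by (rule doubleton_familyE)
  with assms(3) have "e = {x, v} \<and> x \<noteq> v \<or> e = {x, u} \<and> x \<noteq> u" by (auto simp: insert_commute)
  with that show thesis by blast
qed

lemma doubleton_family_subset: "doubleton_family E \<Longrightarrow> H \<subseteq> E \<Longrightarrow> doubleton_family H"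
  unfolding doubleton_family_def by blast

lemma simple_graph_doubleton_family: "simple_graph V E \<Longrightarrow> doubleton_family E"
  unfolding simple_graph_def doubleton_family_def by blast

lemma simple_graph_edge_subset: "simple_graph V E \<Longrightarrow> e \<in> E \<Longrightarrow> e \<subseteq> V"
  unfolding simple_graph_def by fastforce

lemma simple_graph_finite_edges: "simple_graph V E \<Longrightarrow> finite E"
proof -
  assume "simple_graph V E"
  then have "E \<subseteq> Pow V" "finite V" using simple_graph_edge_subset by (auto simp: simple_graph_def)
  then show "finite E" by (simp add: finite_subset)
qed

abbreviation reach :: "'a set set \<Rightarrow> 'a \<Rightarrow> 'a \<Rightarrow> bool" where
  "reach H \<equiv> (\<lambda>a b. {a, b} \<in> H)\<^sup>*\<^sup>*"

definition rooted :: "'a set set \<Rightarrow> 'a \<Rightarrow> bool" where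
  "rooted H r \<longleftrightarrow> (\<forall>e\<in>H. \<forall>w\<in>e. reach H r w)"

definition component_edges :: "'a set set \<Rightarrow> 'a \<Rightarrow> 'a set set" where
  "component_edges H x = {e\<in>H. \<exists>w\<in>e. reach H x w}"

lemma reach_edge_closed:
  assumes "{a, b} \<in> H"
  shows "reach H x a \<longleftrightarrow> reach H x b"
proof -
  have "{b, a} \<in> H" using assms by (simp add: insert_commute)
  with assms show ?thesis by (auto intro: rtranclp.rtrancl_into_rtrancl)
qed

lemma rooted_component_edges:
  assumes "doubleton_family H"
  shows "rooted (component_edges H x) x"
  unfolding rooted_def
proof (intro ballI)
  fix e w assume e: "e \<in> component_edges H x" and "w \<in> e"
  then have "e \<in> H" and "\<exists>u\<in>e. reach H x u" unfolding component_edges_def by simp_all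
  moreover obtain v where "e = {w, v}"
    using doubleton_family_memberE[OF assms \<open>e \<in> H\<close> \<open>w \<in> e\<close>] by blast
  ultimately have "reach H x w" using reach_edge_closed[of w v H x] by auto
  then show "reach (component_edges H x) x w"
  proof (induction rule: rtranclp_induct)
    case (step y z)
    then have "{y, z} \<in> component_edges H x" unfolding component_edges_def by auto
    with step.IH show ?case by (rule rtranclp.rtrancl_into_rtrancl)
  qed simp
qed

text \<open>A path from \<open>r\<close> that ends outside the component of \<open>x\<close> in \<open>H - {{r, x}}\<close> never
  enters it.\<close>
lemma rooted_remove_component:
  assumes "rooted H r"
  shows "rooted (H - {{r, x}} - component_edges (H - {{r, x}}) x) r"
    (is "rooted ?A r")
  unfolding rooted_def
proof (intro ballI)
  let ?H' = "H - {{r, x}}"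
  define Rx where "Rx = {w. reach ?H' x w}"
  have closed: "a \<in> Rx \<longleftrightarrow> b \<in> Rx" if "{a, b} \<in> ?H'" for a b
    using reach_edge_closed[OF that] unfolding Rx_def by simp
  have "w \<notin> Rx \<longrightarrow> reach ?A r w" if "reach H r w" for w
    using that
  proof (induction rule: rtranclp_induct)
    case (step y z)
    show ?case
    proof
      assume z: "z \<notin> Rx"
      show "reach ?A r z"
      proof (cases "{y, z} = {r, x}")
        case True
        with z show ?thesis unfolding Rx_def by (auto simp: doubleton_eq_iff)
      next
        case False
        with step.hyps(2) have yz: "{y, z} \<in> ?H'" by simp
        with z closed have "y \<notin> Rx" by blast
        with yz z have "{y, z} \<in> ?A"
          unfolding component_edges_def Rx_def by auto
        with step.IH \<open>y \<notin> Rx\<close> show ?thesis by (blast intro: rtranclp.rtrancl_into_rtrancl)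
      qed
    qed
  qed simp
  moreover fix e w assume "e \<in> ?A" "w \<in> e"
  moreover from this have "w \<notin> Rx" unfolding component_edges_def Rx_def by auto
  ultimately show "reach ?A r w" using assms unfolding rooted_def by blast
qed

lemma rooted_edge_at_root:
  assumes "rooted H r" "doubleton_family H" "H \<noteq> {}"
  obtains x where "{r, x} \<in> H"
proof -
  obtain e where "e \<in> H" using assms(3) by blast
  with assms(2) obtain u v where "{u, v} \<in> H" by (metis doubleton_familyE)
  then have "reach H r u" using assms(1) unfolding rooted_def by blast
  then show thesis
  proof (cases rule: converse_rtranclpE)
    case base
    with \<open>{u, v} \<in> H\<close> that show thesis by blast
  next
    case (step y)
    with that show thesis by blast
  qed
qed

fun cherry :: "'a set set \<Rightarrow> 'a \<times> 'a \<times> 'a \<Rightarrow> bool" where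
  "cherry H (a, b, c) \<longleftrightarrow> {a, b} \<in> H \<and> {b, c} \<in> H \<and> a \<noteq> b \<and> b \<noteq> c \<and> a \<noteq> c"

fun cherry_edges :: "'a \<times> 'a \<times> 'a \<Rightarrow> 'a set set" where
  "cherry_edges (a, b, c) = {{a, b}, {b, c}}"

lemma cherry_mono: "cherry H p \<Longrightarrow> H \<subseteq> H' \<Longrightarrow> cherry H' p"
  by (cases p) auto

text \<open>The leftover edge must contain the root, so that one level up in the induction it can be
  paired with the edge joining the root to its parent into a further cherry.\<close>
definition cherry_cover :: "'a set set \<Rightarrow> 'a \<Rightarrow> ('a \<times> 'a \<times> 'a) list \<Rightarrow> 'a set list \<Rightarrow> bool" where
  "cherry_cover H r P S \<longleftrightarrow> (\<forall>p\<in>set P. cherry H p) \<and> set S \<subseteq> H \<and> length S \<le> 1 \<and>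
     (\<forall>e\<in>set S. r \<in> e) \<and> H \<subseteq> \<Union>(cherry_edges ` set P) \<union> set S \<and>
     2 * length P + length S \<le> card H"

lemma cherry_cover_empty: "cherry_cover {} r [] []"
  unfolding cherry_cover_def by simp

lemma cherry_cover_join:
  assumes A: "cherry_cover A r PA SA" and B: "cherry_cover B x PB SB"
    and fin: "finite A" "finite B" and disj: "A \<inter> B = {}" and new: "{r, x} \<notin> A \<union> B"
    and "r \<noteq> x" and dbl: "doubleton_family (A \<union> B)"
  shows "\<exists>P S. cherry_cover (insert {r, x} (A \<union> B)) r P S"
proof -
  let ?H = "insert {r, x} (A \<union> B)"
  have card: "card ?H = card A + card B + 1"
    using fin disj new by (simp add: card_Un_disjoint)
  have cherries: "\<forall>p\<in>set (PA @ PB). cherry ?H p"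
    using A B unfolding cherry_cover_def by (auto intro: cherry_mono)
  have cover: "A \<union> B \<subseteq> \<Union>(cherry_edges ` set (PA @ PB)) \<union> set SA \<union> set SB"
    using A B unfolding cherry_cover_def by auto
  show ?thesis
  proof (cases SB)
    case (Cons eb SB')
    with B have "SB = [eb]" "eb \<in> B" "x \<in> eb" unfolding cherry_cover_def by auto
    moreover obtain z where z: "eb = {x, z}" "x \<noteq> z"
      using dbl \<open>eb \<in> B\<close> \<open>x \<in> eb\<close> by (meson UnI2 doubleton_family_memberE)
    moreover have "r \<noteq> z" using new \<open>eb \<in> B\<close> z by (auto simp: insert_commute)
    ultimately have "cherry_cover ?H r (PA @ PB @ [(r, x, z)]) SA"
      using A B cherries cover card \<open>r \<noteq> x\<close> unfolding cherry_cover_def by auto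
    then show ?thesis by blast
  next
    case Nil
    show ?thesis
    proof (cases SA)
      case (Cons ea SA')
      with A have "SA = [ea]" "ea \<in> A" "r \<in> ea" unfolding cherry_cover_def by auto
      moreover obtain y where y: "ea = {r, y}" "r \<noteq> y"
        using dbl \<open>ea \<in> A\<close> \<open>r \<in> ea\<close> by (meson UnI1 doubleton_family_memberE)
      moreover have "x \<noteq> y" using new \<open>ea \<in> A\<close> y by (auto simp: insert_commute)
      ultimately have "cherry_cover ?H r (PA @ PB @ [(x, r, y)]) []"
        using A B cherries cover card \<open>r \<noteq> x\<close> \<open>SB = []\<close>
        unfolding cherry_cover_def by (auto simp: insert_commute)
      then show ?thesis by blast
    next
      case Nil
      with A B cherries cover card \<open>SB = []\<close> have "cherry_cover ?H r (PA @ PB) [{r, x}]"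
        unfolding cherry_cover_def by auto
      then show ?thesis by blast
    qed
  qed
qed

lemma rooted_cherry_cover:
  assumes "finite H" "doubleton_family H" "rooted H r"
  shows "\<exists>P S. cherry_cover H r P S"
  using assms
proof (induction "card H" arbitrary: H r rule: less_induct)
  case less
  show ?case
  proof (cases "H = {}")
    case True
    then have "cherry_cover H r [] []" using cherry_cover_empty by simp
    then show ?thesis by blast
  next
    case False
    obtain x where rx: "{r, x} \<in> H"
      using rooted_edge_at_root[OF less.prems(3,2) False] .
    with less.prems(2) have "r \<noteq> x" by (metis doubleton_familyE doubleton_eq_iff insert_absorb2)
    define B where "B = component_edges (H - {{r, x}}) x"
    define A where "A = H - {{r, x}} - B"
    have H: "H = insert {r, x} (A \<union> B)" and new: "{r, x} \<notin> A \<union> B"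
      using rx unfolding A_def B_def component_edges_def by auto
    have fin: "finite A" "finite B" and dbl: "doubleton_family (A \<union> B)"
      using less.prems(1,2) H by (auto intro: doubleton_family_subset)
    have "card (A \<union> B) < card H" using less.prems(1) H new by (simp add: card_insert_if)
    moreover have "card A \<le> card (A \<union> B)" "card B \<le> card (A \<union> B)"
      using fin by (simp_all add: card_mono)
    ultimately have card: "card A < card H" "card B < card H" by simp_all
    have "rooted A r"
      using rooted_remove_component[OF less.prems(3)] unfolding A_def B_def .
    moreover have "rooted B x"
      unfolding B_def using less.prems(2) by (blast intro: rooted_component_edges doubleton_family_subset)
    ultimately obtain PA SA PB SB where "cherry_cover A r PA SA" "cherry_cover B x PB SB"
      using less.hyps card fin dbl by (meson doubleton_family_subset sup_ge1 sup_ge2)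
    moreover have "A \<inter> B = {}" unfolding A_def by blast
    ultimately show ?thesis
      using cherry_cover_join fin new \<open>r \<noteq> x\<close> dbl H by metis
  qed
qed

definition reverse_arcs :: "'a set set \<Rightarrow> ('a \<times> 'a) set \<Rightarrow> ('a \<times> 'a) set" where
  "reverse_arcs D A = {(u, v). ((u, v) \<in> A \<and> {u, v} \<notin> D) \<or> ((v, u) \<in> A \<and> {u, v} \<in> D)}"

definition induced_edges :: "'a set set \<Rightarrow> 'a set \<Rightarrow> 'a set set" where
  "induced_edges E X = {e\<in>E. e \<subseteq> X}"

fun flipped_edges :: "'a set set \<Rightarrow> 'a set list \<Rightarrow> 'a set set" where
  "flipped_edges E [] = {}"
| "flipped_edges E (X # Xs) = sym_diff (induced_edges E X) (flipped_edges E Xs)"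

lemma reverse_arcs_empty [simp]: "reverse_arcs {} A = A"
  unfolding reverse_arcs_def by auto

lemma reverse_arcs_reverse_arcs:
  "reverse_arcs D (reverse_arcs D' A) = reverse_arcs (sym_diff D D') A"
  unfolding reverse_arcs_def by (auto simp: insert_commute)

lemma reverse_arcs_edges:
  assumes "\<forall>(u, v)\<in>A. {u, v} \<in> E"
  shows "\<forall>(u, v)\<in>reverse_arcs D A. {u, v} \<in> E"
  using assms unfolding reverse_arcs_def by (auto simp: insert_commute)

lemma invert_eq_reverse_arcs:
  assumes "\<forall>(u, v)\<in>A. {u, v} \<in> E"
  shows "invert X A = reverse_arcs (induced_edges E X) A"
  using assms unfolding invert_def reverse_arcs_def induced_edges_def
  by (auto simp: insert_commute)

text \<open>Inversions commute: a sequence of them reverses exactly the edges lying in an odd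
  number of the inverted sets.\<close>
lemma invert_seq_eq_reverse_arcs:
  assumes "\<forall>(u, v)\<in>A. {u, v} \<in> E"
  shows "invert_seq Xs A = reverse_arcs (flipped_edges E Xs) A"
  using assms
proof (induction Xs arbitrary: A)
  case Nil
  then show ?case by (simp add: invert_seq_def)
next
  case (Cons X Xs)
  have "invert_seq (X # Xs) A = invert_seq Xs (reverse_arcs (induced_edges E X) A)"
    using invert_eq_reverse_arcs[OF Cons.prems] by (simp add: invert_seq_def)
  also have "\<dots> = reverse_arcs (flipped_edges E Xs) (reverse_arcs (induced_edges E X) A)"
    using Cons.IH reverse_arcs_edges[OF Cons.prems] by blast
  also have "\<dots> = reverse_arcs (flipped_edges E (X # Xs)) A"
    by (simp add: reverse_arcs_reverse_arcs Un_commute)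
  finally show ?case .
qed

lemma flipped_edges_append:
  "flipped_edges E (Xs @ Ys) = sym_diff (flipped_edges E Xs) (flipped_edges E Ys)"
  by (induction Xs) auto

lemma flipped_edges_subset: "flipped_edges E Xs \<subseteq> E"
  by (induction Xs) (auto simp: induced_edges_def)

lemma orientation_eq_reverse_arcs:
  assumes A1: "is_orientation E A1" and A2: "is_orientation E A2"
  obtains D where "D \<subseteq> E" "A2 = reverse_arcs D A1"
proof -
  define D where "D = {{u, v} | u v. (u, v) \<in> A1 \<and> (v, u) \<in> A2}"
  have edge: "{u, v} \<in> E" if "(u, v) \<in> A1 \<or> (u, v) \<in> A2" for u v
    using that A1 A2 unfolding is_orientation_def by auto
  have D: "{u, v} \<in> D \<longleftrightarrow> ((u, v) \<in> A1 \<and> (v, u) \<in> A2) \<or> ((v, u) \<in> A1 \<and> (u, v) \<in> A2)" for u v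
    unfolding D_def by (auto simp: doubleton_eq_iff)
  have "(u, v) \<in> A2 \<longleftrightarrow> (u, v) \<in> reverse_arcs D A1" for u v
  proof (cases "{u, v} \<in> E")
    case True
    then have "(u, v) \<in> A1 \<longleftrightarrow> (v, u) \<notin> A1" "(u, v) \<in> A2 \<longleftrightarrow> (v, u) \<notin> A2"
      using A1 A2 unfolding is_orientation_def by blast+
    then show ?thesis using D unfolding reverse_arcs_def by auto
  next
    case False
    then have "{v, u} \<notin> E" by (simp add: insert_commute)
    with False show ?thesis using edge unfolding reverse_arcs_def by blast
  qed
  then have "A2 = reverse_arcs D A1" by auto
  moreover have "D \<subseteq> E" unfolding D_def using edge by auto
  ultimately show thesis using that by blast
qed

definition small_sets :: "nat \<Rightarrow> 'a set \<Rightarrow> 'a set set" where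
  "small_sets p V = {X. X \<subseteq> V \<and> card X \<le> p}"

lemma inv_dist_le_length:
  assumes "set Xs \<subseteq> small_sets p V" "invert_seq Xs A1 = A2"
  shows "inv_dist p V A1 A2 \<le> length Xs"
  unfolding inv_dist_def by (rule Least_le) (use assms in \<open>auto simp: small_sets_def\<close>)

text \<open>\<open>A0\<close> excludes the junk value \<open>Max {}\<close>; the bound \<open>b\<close> itself makes the maximized set finite.\<close>
lemma id_le_le:
  assumes "is_orientation E A0"
    and "\<And>A1 A2. is_orientation E A1 \<Longrightarrow> is_orientation E A2 \<Longrightarrow> inv_dist p V A1 A2 \<le> b"
  shows "id_le p V E \<le> b"
proof -
  let ?S = "{inv_dist p V A1 A2 | A1 A2. is_orientation E A1 \<and> is_orientation E A2}"
  have "?S \<subseteq> {..b}" using assms(2) by auto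
  then have "finite ?S" by (rule finite_subset) simp
  moreover have "?S \<noteq> {}" using assms(1) by blast
  ultimately show ?thesis unfolding id_le_def using assms(2) by (auto simp: Max_le_iff)
qed

lemma orientation_exists:
  assumes "doubleton_family E"
  obtains A where "is_orientation E A"
proof -
  define tail where "tail e = (SOME w. w \<in> e)" for e :: "'a set"
  define A where "A = {(u, v). {u, v} \<in> E \<and> u = tail {u, v}}"
  have "is_orientation E A"
    unfolding is_orientation_def
  proof (intro conjI allI impI)
    show "\<forall>(u, v)\<in>A. {u, v} \<in> E" unfolding A_def by auto
    fix u v assume e: "{u, v} \<in> E"
    then have "u \<noteq> v" using assms by (metis doubleton_familyE doubleton_eq_iff insert_absorb2)
    moreover have "tail {u, v} \<in> {u, v}" unfolding tail_def by (rule someI[of _ u]) simp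
    ultimately show "(u, v) \<in> A \<longleftrightarrow> (v, u) \<notin> A"
      using e unfolding A_def by (auto simp: insert_commute)
  qed
  then show thesis by (rule that)
qed

lemma induced_edges_empty:
  assumes "doubleton_family E"
  shows "induced_edges E {} = {}"
  using assms unfolding induced_edges_def by (auto elim: doubleton_familyE)

lemma induced_edges_edge:
  assumes "doubleton_family E" "e \<in> E"
  shows "induced_edges E e = {e}"
proof -
  have "f = e" if "f \<in> E" "f \<subseteq> e" for f
  proof -
    obtain a b where "e = {a, b}" "a \<noteq> b" using assms by (rule doubleton_familyE)
    moreover obtain u v where "f = {u, v}" "u \<noteq> v" using assms(1) \<open>f \<in> E\<close> by (rule doubleton_familyE)
    ultimately show "f = e" using \<open>f \<subseteq> e\<close> by (auto simp: doubleton_eq_iff)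
  qed
  then show ?thesis using assms(2) unfolding induced_edges_def by auto
qed

lemma induced_edges_triple:
  assumes "doubleton_family E"
  shows "induced_edges E {a, b, c} \<subseteq> {{a, b}, {b, c}, {a, c}}"
proof
  fix e assume "e \<in> induced_edges E {a, b, c}"
  then have "e \<in> E" "e \<subseteq> {a, b, c}" unfolding induced_edges_def by auto
  obtain u v where e: "e = {u, v}" "u \<noteq> v" using assms \<open>e \<in> E\<close> by (rule doubleton_familyE)
  with \<open>e \<subseteq> {a, b, c}\<close> have "u \<in> {a, b, c}" "v \<in> {a, b, c}" by auto
  with e show "e \<in> {{a, b}, {b, c}, {a, c}}"
    by (elim insertE emptyE) (simp_all add: insert_commute)
qed

definition realizable_block :: "nat \<Rightarrow> 'a set \<Rightarrow> 'a set set \<Rightarrow> 'a set set \<Rightarrow> 'a set set \<Rightarrow> bool" where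
  "realizable_block p V E H B \<longleftrightarrow> (\<forall>U\<subseteq>B. \<exists>X\<in>small_sets p V. induced_edges E X \<inter> H = U)"

lemma realizable_block_edge:
  assumes "doubleton_family E" "H \<subseteq> E" "e \<in> H" "e \<subseteq> V" "2 \<le> p"
  shows "realizable_block p V E H {e}"
  unfolding realizable_block_def
proof (intro allI impI)
  fix U assume "U \<subseteq> {e}"
  then consider "U = {}" | "U = {e}" by blast
  then show "\<exists>X\<in>small_sets p V. induced_edges E X \<inter> H = U"
  proof cases
    case 1
    then show ?thesis using induced_edges_empty[OF assms(1)]
      by (intro bexI[of _ "{}"]) (auto simp: small_sets_def)
  next
    case 2
    from assms(1-3) obtain a b where "e = {a, b}" by (blast elim: doubleton_familyE)
    then have "card e \<le> p" using assms(5) by (simp add: card_insert_if)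
    with 2 show ?thesis using induced_edges_edge[OF assms(1)] assms(2-4)
      by (intro bexI[of _ e]) (auto simp: small_sets_def)
  qed
qed

lemma realizable_block_cherry:
  assumes "doubleton_family E" "H \<subseteq> E" "cherry H (a, b, c)" "{a, c} \<notin> H"
    and "{a, b, c} \<subseteq> V" "3 \<le> p"
  shows "realizable_block p V E H (cherry_edges (a, b, c))"
  unfolding realizable_block_def
proof (intro allI impI)
  fix U assume "U \<subseteq> cherry_edges (a, b, c)"
  then consider "U = {}" | "U = {{a, b}}" | "U = {{b, c}}" | "U = {{a, b}, {b, c}}" by auto
  then show "\<exists>X\<in>small_sets p V. induced_edges E X \<inter> H = U"
  proof cases
    case 1
    then show ?thesis using induced_edges_empty[OF assms(1)]
      by (intro bexI[of _ "{}"]) (auto simp: small_sets_def)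
  next
    case 2
    then show ?thesis using assms induced_edges_edge[OF assms(1), of "{a, b}"]
      by (intro bexI[of _ "{a, b}"]) (auto simp: small_sets_def card_insert_if)
  next
    case 3
    then show ?thesis using assms induced_edges_edge[OF assms(1), of "{b, c}"]
      by (intro bexI[of _ "{b, c}"]) (auto simp: small_sets_def card_insert_if)
  next
    case 4
    have "{{a, b}, {b, c}} \<subseteq> induced_edges E {a, b, c}"
      using assms(2,3) unfolding induced_edges_def by auto
    with induced_edges_triple[OF assms(1), of a b c] assms(3,4)
    have "induced_edges E {a, b, c} \<inter> H = {{a, b}, {b, c}}" by auto
    moreover have "card {a, b, c} \<le> p" using assms(6) by (simp add: card_insert_if)
    ultimately show ?thesis using 4 assms(5)
      by (intro bexI[of _ "{a, b, c}"]) (auto simp: small_sets_def)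
  qed
qed

lemma realize_blocks:
  assumes "\<forall>B\<in>set Bs. realizable_block p V E H B" "U \<subseteq> \<Union>(set Bs)"
  shows "\<exists>Xs. length Xs = length Bs \<and> set Xs \<subseteq> small_sets p V \<and> flipped_edges E Xs \<inter> H = U"
  using assms
proof (induction Bs arbitrary: U)
  case Nil
  then show ?case by simp
next
  case (Cons B Bs)
  obtain Xs where Xs: "length Xs = length Bs" "set Xs \<subseteq> small_sets p V"
      "flipped_edges E Xs \<inter> H = U - B"
    using Cons by (metis Diff_subset_conv list.set_intros(2) Union_insert list.simps(15))
  obtain X where X: "X \<in> small_sets p V" "induced_edges E X \<inter> H = U \<inter> B"
    using Cons.prems(1) unfolding realizable_block_def by (meson Int_lower2 list.set_intros(1))
  have "flipped_edges E (X # Xs) \<inter> H = U"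
    using Xs(3) X(2) by auto
  with Xs X show ?case by (intro exI[of _ "X # Xs"]) auto
qed

lemma realize_edge_set:
  assumes "doubleton_family E" "\<And>e. e \<in> E \<Longrightarrow> e \<subseteq> V" "2 \<le> p" "finite T" "T \<subseteq> E"
  shows "\<exists>Xs. length Xs = card T \<and> set Xs \<subseteq> small_sets p V \<and> flipped_edges E Xs = T"
  using assms(4,5)
proof (induction T rule: finite_induct)
  case empty
  then show ?case by simp
next
  case (insert e T)
  then obtain Xs where Xs: "length Xs = card T" "set Xs \<subseteq> small_sets p V" "flipped_edges E Xs = T"
    by auto
  have "e \<in> E" using insert.prems by simp
  obtain a b where "e = {a, b}" using assms(1) \<open>e \<in> E\<close> by (rule doubleton_familyE)
  then have "e \<in> small_sets p V" using assms(2,3) \<open>e \<in> E\<close> by (auto simp: small_sets_def card_insert_if)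
  moreover have "flipped_edges E (e # Xs) = insert e T"
    using Xs(3) induced_edges_edge[OF assms(1) \<open>e \<in> E\<close>] insert.hyps(2) by auto
  ultimately show ?case using Xs insert.hyps by (intro exI[of _ "e # Xs"]) auto
qed

lemma inv_dist_le_blocks:
  assumes "doubleton_family E" "\<And>e. e \<in> E \<Longrightarrow> e \<subseteq> V" "2 \<le> p" "F \<subseteq> E" "finite F"
    and "\<forall>B\<in>set Bs. realizable_block p V E (E - F) B" "E - F \<subseteq> \<Union>(set Bs)"
    and "is_orientation E A1" "is_orientation E A2"
  shows "inv_dist p V A1 A2 \<le> length Bs + card F"
proof -
  obtain D where "D \<subseteq> E" and A2: "A2 = reverse_arcs D A1"
    by (rule orientation_eq_reverse_arcs[OF assms(8,9)])
  have "D \<inter> (E - F) \<subseteq> \<Union>(set Bs)" using assms(7) by blast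
  then obtain Xs1 where Xs1: "length Xs1 = length Bs" "set Xs1 \<subseteq> small_sets p V"
      "flipped_edges E Xs1 \<inter> (E - F) = D \<inter> (E - F)"
    using realize_blocks[OF assms(6)] by blast
  define T where "T = sym_diff (flipped_edges E Xs1) D"
  have "T \<subseteq> F" using Xs1(3) flipped_edges_subset[of E Xs1] \<open>D \<subseteq> E\<close> unfolding T_def by auto
  have "finite T" using \<open>T \<subseteq> F\<close> assms(5) by (rule finite_subset)
  have "card T \<le> card F" using assms(5) \<open>T \<subseteq> F\<close> by (rule card_mono)
  have "T \<subseteq> E" using \<open>T \<subseteq> F\<close> assms(4) by (rule order_trans)
  then obtain Xs2 where Xs2: "length Xs2 = card T" "set Xs2 \<subseteq> small_sets p V"
      "flipped_edges E Xs2 = T"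
    using realize_edge_set[OF assms(1-3) \<open>finite T\<close>] by blast
  have "flipped_edges E (Xs1 @ Xs2) = D"
    using Xs2(3) unfolding flipped_edges_append T_def by auto
  moreover have "\<forall>(u, v)\<in>A1. {u, v} \<in> E" using assms(8) by (simp add: is_orientation_def)
  ultimately have "invert_seq (Xs1 @ Xs2) A1 = A2" using invert_seq_eq_reverse_arcs A2 by metis
  moreover have "set (Xs1 @ Xs2) \<subseteq> small_sets p V" using Xs1(2) Xs2(2) by simp
  ultimately have "inv_dist p V A1 A2 \<le> length (Xs1 @ Xs2)" using inv_dist_le_length by blast
  also have "\<dots> \<le> length Bs + card F" using Xs1(1) Xs2(1) \<open>card T \<le> card F\<close> by simp
  finally show ?thesis .
qed

lemma tau3_attained:
  obtains F where "triangle_transversal E F" "card F = tau3 E"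
proof -
  have "triangle_transversal E E" unfolding triangle_transversal_def has_triangle_def by simp
  then have "\<exists>k F. triangle_transversal E F \<and> card F = k" by blast
  then have "\<exists>F. triangle_transversal E F \<and> card F = tau3 E"
    unfolding tau3_def by (rule LeastI_ex)
  with that show thesis by blast
qed

lemma tau3_le:
  assumes "triangle_transversal E F"
  shows "tau3 E \<le> card F"
  unfolding tau3_def by (rule Least_le) (use assms in blast)

lemma minimum_transversal_edge_in_triangle:
  assumes "finite E" "triangle_transversal E F" "card F = tau3 E" "{x, y} \<in> F"
  obtains z where "{x, z} \<in> E - F" "{z, y} \<in> E - F"
proof -
  have "F \<subseteq> E" and free: "\<not> has_triangle (E - F)"
    using assms(2) unfolding triangle_transversal_def by auto
  have "finite F" using \<open>F \<subseteq> E\<close> assms(1) by (rule finite_subset)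
  then have "card (F - {{x, y}}) < tau3 E" using assms(3,4) by (metis card_Diff1_less)
  then have "\<not> triangle_transversal E (F - {{x, y}})" using tau3_le not_le by blast
  moreover have "E - (F - {{x, y}}) = insert {x, y} (E - F)" using assms(4) \<open>F \<subseteq> E\<close> by auto
  ultimately obtain a b c where abc: "a \<noteq> b" "b \<noteq> c" "a \<noteq> c"
      "{a, b} \<in> insert {x, y} (E - F)" "{b, c} \<in> insert {x, y} (E - F)"
      "{a, c} \<in> insert {x, y} (E - F)"
    using \<open>F \<subseteq> E\<close> unfolding triangle_transversal_def has_triangle_def by auto
  have "\<not> ({a, b} \<in> E - F \<and> {b, c} \<in> E - F \<and> {a, c} \<in> E - F)"
    using free abc(1-3) unfolding has_triangle_def by blast
  with abc(4-6) consider (ab) "{a, b} = {x, y}" | (bc) "{b, c} = {x, y}" | (ac) "{a, c} = {x, y}"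
    by blast
  moreover have "{a, b} \<noteq> {b, c}" "{a, b} \<noteq> {a, c}" "{b, c} \<noteq> {a, c}"
    using abc(1-3) by (auto simp: doubleton_eq_iff)
  ultimately show thesis
  proof cases
    case ab
    with abc(5,6) \<open>{a, b} \<noteq> {b, c}\<close> \<open>{a, b} \<noteq> {a, c}\<close>
    have "{b, c} \<in> E - F" "{a, c} \<in> E - F" by auto
    with ab show thesis using that[of c] by (auto simp: doubleton_eq_iff insert_commute)
  next
    case bc
    with abc(4,6) \<open>{a, b} \<noteq> {b, c}\<close> \<open>{b, c} \<noteq> {a, c}\<close>
    have "{a, b} \<in> E - F" "{a, c} \<in> E - F" by auto
    with bc show thesis using that[of a] by (auto simp: doubleton_eq_iff insert_commute)
  next
    case ac
    with abc(4,5) \<open>{a, b} \<noteq> {a, c}\<close> \<open>{b, c} \<noteq> {a, c}\<close>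
    have "{a, b} \<in> E - F" "{b, c} \<in> E - F" by auto
    with ac show thesis using that[of b] by (auto simp: doubleton_eq_iff insert_commute)
  qed
qed

lemma reach_minimum_transversal_remainder:
  assumes "finite E" "triangle_transversal E F" "card F = tau3 E" "reach E u v"
  shows "reach (E - F) u v"
  using assms(4)
proof (induction rule: rtranclp_induct)
  case (step y z)
  have "reach (E - F) y z"
  proof (cases "{y, z} \<in> F")
    case True
    then obtain w where "{y, w} \<in> E - F" "{w, z} \<in> E - F"
      by (rule minimum_transversal_edge_in_triangle[OF assms(1-3)])
    then have "reach (E - F) y w" "reach (E - F) w z" by (simp_all add: r_into_rtranclp)
    then show ?thesis by (rule rtranclp_trans)
  next
    case False
    with step.hyps(2) show ?thesis by (simp add: r_into_rtranclp)
  qed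
  with step.IH show ?case by (rule rtranclp_trans)
qed simp

lemma connected_graph_rooted:
  assumes "connected_graph V E" "r \<in> V" "\<And>e. e \<in> H \<Longrightarrow> e \<subseteq> V"
    and "\<And>u v. reach E u v \<Longrightarrow> reach H u v"
  shows "rooted H r"
  using assms unfolding connected_graph_def rooted_def by blast

lemma cherry_cover_blocks:
  assumes "cherry_cover H r P S" "\<not> has_triangle H" "doubleton_family E" "H \<subseteq> E"
    and "\<And>e. e \<in> E \<Longrightarrow> e \<subseteq> V" "3 \<le> p"
  obtains Bs where "\<forall>B\<in>set Bs. realizable_block p V E H B" "H \<subseteq> \<Union>(set Bs)"
    "2 * length Bs \<le> card H + 1"
proof
  let ?Bs = "map cherry_edges P @ map (\<lambda>e. {e}) S"
  show "\<forall>B\<in>set ?Bs. realizable_block p V E H B"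
  proof
    fix B assume "B \<in> set ?Bs"
    then consider (cherry) q where "q \<in> set P" "B = cherry_edges q"
      | (edge) e where "e \<in> set S" "B = {e}"
      by auto
    then show "realizable_block p V E H B"
    proof cases
      case cherry
      obtain a b c where q: "q = (a, b, c)" by (cases q)
      with cherry(1) have abc: "cherry H (a, b, c)" using assms(1) unfolding cherry_cover_def by blast
      then have "{a, c} \<notin> H" using assms(2) unfolding has_triangle_def by auto
      moreover have "{a, b, c} \<subseteq> V" using abc assms(4,5) by auto
      ultimately show ?thesis
        using realizable_block_cherry[OF assms(3,4) abc] assms(6) cherry(2) q by simp
    next
      case edge
      then have "e \<in> H" using assms(1) unfolding cherry_cover_def by blast
      moreover have "e \<subseteq> V" using \<open>e \<in> H\<close> assms(4,5) by blast
      ultimately show ?thesis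
        using realizable_block_edge[OF assms(3,4)] assms(6) edge(2) by simp
    qed
  qed
  show "H \<subseteq> \<Union>(set ?Bs)" using assms(1) unfolding cherry_cover_def by auto
  show "2 * length ?Bs \<le> card H + 1" using assms(1) unfolding cherry_cover_def by simp
qed

lemma int_le_ceiling_half:
  fixes k n :: nat
  assumes "2 * k \<le> n + 1"
  shows "int k \<le> \<lceil>real n / 2\<rceil>"
  using assms by (simp add: le_ceiling_iff)

theorem mainTheorem8:
  fixes V :: "'a set" and E :: "'a set set"
  assumes "simple_graph V E" and "connected_graph V E"
  shows "int (id_le 3 V E) \<le> \<lceil>(real (card E) + real (tau3 E)) / 2\<rceil>"
proof -
  have dbl: "doubleton_family E" using assms(1) by (rule simple_graph_doubleton_family)
  have V: "\<And>e. e \<in> E \<Longrightarrow> e \<subseteq> V" using assms(1) by (rule simple_graph_edge_subset)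
  have "finite E" using assms(1) by (rule simple_graph_finite_edges)
  obtain F where F: "triangle_transversal E F" "card F = tau3 E" by (rule tau3_attained)
  then have "F \<subseteq> E" and free: "\<not> has_triangle (E - F)" unfolding triangle_transversal_def by auto
  have "finite F" using \<open>F \<subseteq> E\<close> \<open>finite E\<close> by (rule finite_subset)
  obtain r where "r \<in> V" using assms(2) unfolding connected_graph_def by blast
  have "rooted (E - F) r"
    by (rule connected_graph_rooted[OF assms(2) \<open>r \<in> V\<close>])
      (use V reach_minimum_transversal_remainder[OF \<open>finite E\<close> F] in auto)
  moreover have "finite (E - F)" using \<open>finite E\<close> by simp
  moreover have "doubleton_family (E - F)" using dbl Diff_subset by (rule doubleton_family_subset)
  ultimately have "\<exists>P S. cherry_cover (E - F) r P S" by (intro rooted_cherry_cover)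
  then obtain P S where cover: "cherry_cover (E - F) r P S" by blast
  obtain Bs where Bs: "\<forall>B\<in>set Bs. realizable_block 3 V E (E - F) B" "E - F \<subseteq> \<Union>(set Bs)"
      "2 * length Bs \<le> card (E - F) + 1"
    by (rule cherry_cover_blocks[OF cover free dbl Diff_subset V order_refl])
  obtain A0 where "is_orientation E A0" using dbl by (rule orientation_exists)
  then have "id_le 3 V E \<le> length Bs + card F"
    by (rule id_le_le) (use inv_dist_le_blocks[OF dbl V _ \<open>F \<subseteq> E\<close> \<open>finite F\<close> Bs(1,2)] in simp)
  moreover have "card (E - F) = card E - card F" "card F \<le> card E"
    using \<open>F \<subseteq> E\<close> \<open>finite E\<close> \<open>finite F\<close> by (simp_all add: card_Diff_subset card_mono)
  ultimately have "2 * id_le 3 V E \<le> (card E + tau3 E) + 1" using Bs(3) F(2) by linarith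
  then show ?thesis using int_le_ceiling_half by fastforce
qed

end
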